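(* Let $k\geq 2$ be an integer and let $P$ be a finite poset of width $w$ that does not contain $\mathbf{k}+\mathbf{k}$ as an induced subposet. Then $P$ extends some interval order $Q$ of width at most $(2k-3)w$.
   Context: The width of a poset is the maximum size of an antichain. $\mathbf{k}+\mathbf{k}$ denotes the poset consisting of two disjoint chains $A,B$ with $|A|=|B|=k$ in which every element of $A$ is incomparable with every element of $B$; "$P$ does not contain $\mathbf{k}+\mathbf{k}$" means $P$ has no induced subposet isomorphic to it, i.e. there are no two disjoint chains of size $k$ in $P$ such that every element of one is incomparable to every element of the other. A poset $P$ extends a poset $Q$ if they have the same ground set and $u<v$ in $Q$ implies $u<v$ in $P$. A poset is an interval order if there is an assignment of closed real intervals $I(u)$ to its elements such that $u<v$ if and only if $I(u)=[a,b]$, $I(v)=[c,d]$ with $b<c$. *)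

theory Defs
  imports Complex_Main
begin

definition strict_poset :: "'a set \<Rightarrow> ('a \<Rightarrow> 'a \<Rightarrow> bool) \<Rightarrow> bool" where
  "strict_poset X lt \<longleftrightarrow>
     (\<forall>x\<in>X. \<not> lt x x) \<and>
     (\<forall>x\<in>X. \<forall>y\<in>X. \<forall>z\<in>X. lt x y \<longrightarrow> lt y z \<longrightarrow> lt x z)"

definition comparable :: "('a \<Rightarrow> 'a \<Rightarrow> bool) \<Rightarrow> 'a \<Rightarrow> 'a \<Rightarrow> bool" where
  "comparable lt x y \<longleftrightarrow> x = y \<or> lt x y \<or> lt y x"

definition is_chain :: "('a \<Rightarrow> 'a \<Rightarrow> bool) \<Rightarrow> 'a set \<Rightarrow> bool" where
  "is_chain lt C \<longleftrightarrow> (\<forall>x\<in>C. \<forall>y\<in>C. comparable lt x y)"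

definition is_antichain :: "('a \<Rightarrow> 'a \<Rightarrow> bool) \<Rightarrow> 'a set \<Rightarrow> bool" where
  "is_antichain lt A \<longleftrightarrow> (\<forall>x\<in>A. \<forall>y\<in>A. x \<noteq> y \<longrightarrow> \<not> comparable lt x y)"

definition width :: "'a set \<Rightarrow> ('a \<Rightarrow> 'a \<Rightarrow> bool) \<Rightarrow> nat" where
  "width X lt = Max (card ` {A. A \<subseteq> X \<and> is_antichain lt A})"

definition contains_k_plus_k :: "nat \<Rightarrow> 'a set \<Rightarrow> ('a \<Rightarrow> 'a \<Rightarrow> bool) \<Rightarrow> bool" where
  "contains_k_plus_k k X lt \<longleftrightarrow>
     (\<exists>A B. A \<subseteq> X \<and> B \<subseteq> X \<and> A \<inter> B = {} \<and> card A = k \<and> card B = k \<and>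
        is_chain lt A \<and> is_chain lt B \<and>
        (\<forall>a\<in>A. \<forall>b\<in>B. \<not> comparable lt a b))"

definition extends :: "'a set \<Rightarrow> ('a \<Rightarrow> 'a \<Rightarrow> bool) \<Rightarrow> ('a \<Rightarrow> 'a \<Rightarrow> bool) \<Rightarrow> bool" where
  "extends X ltP ltQ \<longleftrightarrow> (\<forall>u\<in>X. \<forall>v\<in>X. ltQ u v \<longrightarrow> ltP u v)"

definition interval_order :: "'a set \<Rightarrow> ('a \<Rightarrow> 'a \<Rightarrow> bool) \<Rightarrow> bool" where
  "interval_order X lt \<longleftrightarrow> strict_poset X lt \<and>
     (\<exists>I :: 'a \<Rightarrow> real \<times> real. (\<forall>u\<in>X. fst (I u) \<le> snd (I u)) \<and>
        (\<forall>u\<in>X. \<forall>v\<in>X. lt u v \<longleftrightarrow> snd (I u) < fst (I v)))"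

end

theory Submission
  imports Defs
begin

text \<open>
  For an element u let down u be the set of elements below u, and long_down u the set of those
  z \<le> u from which a chain of at least k elements climbs to u. The level of u compares the sizes
  of these two sets lexicographically and is strictly monotone. Giving u the interval
  [level u, R u], where R u is the largest level of an element not above u, yields an interval
  order Q contained in P.
  Suppose a Q-antichain contained a P-chain c_1 < ... < c_{2k-2}. As c_1 and c_{2k-2} are
  Q-incomparable, some x not above c_1 has level x \<ge> level c_{2k-2}, and such an x is
  incomparable to the whole chain. Since P has no k+k, the chain c_1, ..., c_k forces
  long_down x \<subseteq> down c_k, while c_k, ..., c_{2k-2} gives down c_k \<subseteq> long_down c_{2k-2};
  and c_1 lies in the second set but not in the first, contradicting level x \<ge> level c_{2k-2}.
  So P-chains inside Q-antichains have at most 2k-3 elements, and by Mirsky's argument every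
  Q-antichain is a union of 2k-3 P-antichains.
\<close>

definition level_interval_order ::
    "'a set \<Rightarrow> ('a \<Rightarrow> 'a \<Rightarrow> bool) \<Rightarrow> ('a \<Rightarrow> real) \<Rightarrow> 'a \<Rightarrow> 'a \<Rightarrow> bool" where
  "level_interval_order X lt L u v \<longleftrightarrow> Max (L ` {x\<in>X. \<not> lt u x}) < L v"

lemma is_chain_subset: "is_chain r C \<Longrightarrow> B \<subseteq> C \<Longrightarrow> is_chain r B"
  unfolding is_chain_def by blast

locale finite_strict_poset =
  fixes X :: "'a set" and lt :: "'a \<Rightarrow> 'a \<Rightarrow> bool"
  assumes finite_X: "finite X" and strict_poset: "strict_poset X lt"
begin

abbreviation le :: "'a \<Rightarrow> 'a \<Rightarrow> bool" where
  "le x y \<equiv> lt x y \<or> x = y"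

lemma lt_irrefl: "x \<in> X \<Longrightarrow> \<not> lt x x"
  using strict_poset unfolding strict_poset_def by blast

lemma lt_trans: "x \<in> X \<Longrightarrow> y \<in> X \<Longrightarrow> z \<in> X \<Longrightarrow> lt x y \<Longrightarrow> lt y z \<Longrightarrow> lt x z"
  using strict_poset unfolding strict_poset_def by blast

lemma finite_subset_X: "C \<subseteq> X \<Longrightarrow> finite C"
  using finite_X finite_subset by blast

lemma chain_enumeration:
  assumes C: "C \<subseteq> X" "is_chain lt C"
  obtains f where "bij_betw f {..<card C} C" "\<And>i j. i < j \<Longrightarrow> j < card C \<Longrightarrow> lt (f i) (f j)"
proof -
  define rk where "rk c = card {c'\<in>C. lt c' c}" for c
  have fin: "finite C" using C finite_subset_X by blast
  have rk_less: "rk c < rk d" if "c \<in> C" "d \<in> C" "lt c d" for c d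
  proof -
    have "{c'\<in>C. lt c' c} \<subset> {c'\<in>C. lt c' d}"
      using that C lt_trans lt_irrefl by blast
    then show ?thesis unfolding rk_def using fin by (simp add: psubset_card_mono)
  qed
  have "inj_on rk C"
    using C(2) rk_less unfolding inj_on_def is_chain_def comparable_def by (metis less_irrefl)
  moreover have "rk ` C \<subseteq> {..<card C}"
  proof
    fix i assume "i \<in> rk ` C"
    then obtain c where "c \<in> C" "i = rk c" by blast
    then have "{c'\<in>C. lt c' c} \<subset> C" using C lt_irrefl by blast
    then show "i \<in> {..<card C}" unfolding \<open>i = rk c\<close> rk_def using fin by (simp add: psubset_card_mono)
  qed
  ultimately have bij: "bij_betw rk C {..<card C}"
    unfolding bij_betw_def by (simp add: card_image card_subset_eq)
  define f where "f = the_inv_into C rk"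
  have f_bij: "bij_betw f {..<card C} C"
    unfolding f_def using bij by (rule bij_betw_the_inv_into)
  have rk_f: "rk (f i) = i" if "i < card C" for i
    unfolding f_def using bij that by (simp add: bij_betw_def f_the_inv_into_f)
  have "lt (f i) (f j)" if "i < j" "j < card C" for i j
  proof -
    have fC: "f i \<in> C" "f j \<in> C" using f_bij that bij_betwE by fastforce+
    have "f i \<noteq> f j" using rk_f[of i] rk_f[of j] that by auto
    moreover have "\<not> lt (f j) (f i)" using rk_less[OF fC(2,1)] rk_f[of i] rk_f[of j] that by auto
    ultimately show ?thesis using C(2) fC unfolding is_chain_def comparable_def by blast
  qed
  with f_bij that show ?thesis by blast
qed
lemma chain_bottom_top:
  assumes "C \<subseteq> X" "is_chain lt C" "2 \<le> card C"
  obtains bot top where "bot \<in> C" "top \<in> C" "lt bot top" "\<forall>c\<in>C. le bot c \<and> le c top"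
proof -
  obtain f where f: "bij_betw f {..<card C} C" "\<And>i j. i < j \<Longrightarrow> j < card C \<Longrightarrow> lt (f i) (f j)"
    using chain_enumeration[OF assms(1,2)] by blast
  let ?bot = "f 0" and ?top = "f (card C - 1)"
  have image: "f ` {..<card C} = C" using f(1) by (rule bij_betw_imp_surj_on)
  have "le ?bot c \<and> le c ?top" if "c \<in> C" for c
  proof -
    have "c \<in> f ` {..<card C}" using image that by simp
    then obtain i where i: "i < card C" "c = f i" by blast
    have "le ?bot (f i)" using f(2)[of 0 i] i(1) by (cases "i = 0") auto
    moreover have "le (f i) ?top" using f(2)[of i "card C - 1"] i(1) by (cases "i = card C - 1") auto
    ultimately show ?thesis using i(2) by blast
  qed
  moreover have "?bot \<in> C" "?top \<in> C" using bij_betwE[OF f(1)] assms(3) by simp_all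
  moreover have "lt ?bot ?top" using f(2) assms(3) by simp
  ultimately show ?thesis using that by blast
qed

lemma antichain_card_le_width:
  assumes "A \<subseteq> X" "is_antichain r A"
  shows "card A \<le> width X r"
proof -
  have "finite {B. B \<subseteq> X \<and> is_antichain r B}" using finite_X by simp
  then show ?thesis unfolding width_def using assms by (intro Max_ge) auto
qed

lemma width_attained:
  obtains A where "A \<subseteq> X" "is_antichain r A" "card A = width X r"
proof -
  have "finite {B. B \<subseteq> X \<and> is_antichain r B}" using finite_X by simp
  moreover have "{} \<in> {B. B \<subseteq> X \<and> is_antichain r B}" by (simp add: is_antichain_def)
  ultimately have "width X r \<in> card ` {B. B \<subseteq> X \<and> is_antichain r B}"
    unfolding width_def by (intro Max_in) auto
  with that show ?thesis by auto
qed

text \<open>Mirsky: grade A by the size of the longest chain ending at each element; every grade is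
  an antichain.\<close>

lemma card_le_chain_bound_mult_width:
  assumes A: "A \<subseteq> X" and chains: "\<And>C. C \<subseteq> A \<Longrightarrow> is_chain lt C \<Longrightarrow> card C \<le> h"
  shows "card A \<le> h * width X lt"
proof -
  have fin_A: "finite A" using A finite_subset_X by blast
  define chains_to where "chains_to a = {S. S \<subseteq> A \<and> is_chain lt S \<and> a \<in> S \<and> (\<forall>s\<in>S. le s a)}" for a
  define height where "height a = Max (card ` chains_to a)" for a
  have fin_chains: "finite (chains_to a)" for a
    unfolding chains_to_def by (rule finite_subset[of _ "Pow A"]) (use fin_A in auto)
  have singleton: "{a} \<in> chains_to a" if "a \<in> A" for a
    unfolding chains_to_def is_chain_def comparable_def using that by auto
  have chain_card: "card S \<le> h" if "S \<in> chains_to a" for S a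
    using chains that unfolding chains_to_def by blast
  have height_range: "height a \<in> {1..h}" if "a \<in> A" for a
  proof -
    have "card {a} \<le> height a"
      unfolding height_def by (rule Max_ge[OF fin_chains[THEN finite_imageI] imageI[OF singleton[OF that]]])
    moreover have "height a \<le> h"
      unfolding height_def using fin_chains singleton[OF that] chain_card
      by (subst Max_le_iff) auto
    ultimately show ?thesis by simp
  qed
  have height_less: "height a < height b" if "a \<in> A" "b \<in> A" "lt a b" for a b
  proof -
    have "height a \<in> card ` chains_to a"
      unfolding height_def using fin_chains singleton[OF that(1)] by (intro Max_in) auto
    then obtain S where S: "S \<in> chains_to a" "card S = height a" by auto
    then have S_sub: "S \<subseteq> A" and S_chain: "is_chain lt S" and S_le: "\<forall>s\<in>S. le s a"
      unfolding chains_to_def by auto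
    have below_b: "lt s b" if "s \<in> S" for s
      using S_le that lt_trans[of s a b] S_sub A \<open>a \<in> A\<close> \<open>b \<in> A\<close> \<open>lt a b\<close> by auto
    have "insert b S \<in> chains_to b"
      using S_sub S_chain below_b \<open>b \<in> A\<close> unfolding chains_to_def is_chain_def comparable_def by blast
    then have "card (insert b S) \<le> height b"
      unfolding height_def by (rule Max_ge[OF fin_chains[THEN finite_imageI] imageI])
    moreover have "b \<notin> S" using below_b lt_irrefl \<open>b \<in> A\<close> A by blast
    moreover have "finite S" using S_sub fin_A finite_subset by blast
    ultimately show ?thesis using S(2) by simp
  qed
  define layer where "layer j = {a\<in>A. height a = j}" for j
  have "is_antichain lt (layer j)" for j
    unfolding is_antichain_def comparable_def layer_def using height_less by fastforce
  moreover have "layer j \<subseteq> X" for j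
    using A unfolding layer_def by blast
  ultimately have layer_card: "card (layer j) \<le> width X lt" for j
    by (rule antichain_card_le_width[rotated])
  have "A = (\<Union>j\<in>{1..h}. layer j)"
    unfolding layer_def using height_range by auto
  then have "card A \<le> (\<Sum>j\<in>{1..h}. card (layer j))"
    using card_UN_le[of "{1..h}" layer] by simp
  also have "\<dots> \<le> h * width X lt"
    using sum_bounded_above[of "{1..h}" "\<lambda>j. card (layer j)" "width X lt"] layer_card by simp
  finally show ?thesis .
qed

lemma interval_order_level_interval_order: "interval_order X (level_interval_order X lt L)"
proof -
  let ?R = "\<lambda>u. Max (L ` {x\<in>X. \<not> lt u x})"
  have L_le_R: "L u \<le> ?R u" if "u \<in> X" for u
    using finite_X lt_irrefl that by (intro Max_ge) auto
  have "strict_poset X (level_interval_order X lt L)"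
    unfolding strict_poset_def level_interval_order_def
    using L_le_R by (meson le_less_trans less_le_not_le order.strict_trans)
  moreover have "\<forall>u\<in>X. \<forall>v\<in>X. level_interval_order X lt L u v \<longleftrightarrow> snd (L u, ?R u) < fst (L v, ?R v)"
    unfolding level_interval_order_def by simp
  ultimately show ?thesis
    unfolding interval_order_def using L_le_R by (intro conjI exI[of _ "\<lambda>u. (L u, ?R u)"]) auto
qed

lemma not_level_interval_order_witness:
  assumes "u \<in> X" "\<not> level_interval_order X lt L u v"
  obtains x where "x \<in> X" "\<not> lt u x" "L v \<le> L x"
  using assms finite_X lt_irrefl unfolding level_interval_order_def
  by (subst (asm) Max_less_iff) (auto simp: not_less)

lemma extends_level_interval_order: "extends X lt (level_interval_order X lt L)"
  unfolding extends_def
proof (intro ballI impI)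
  fix u v assume "u \<in> X" "v \<in> X" "level_interval_order X lt L u v"
  then show "lt u v"
    using finite_X lt_irrefl unfolding level_interval_order_def by (subst (asm) Max_less_iff) auto
qed

end

locale kk_free_poset = finite_strict_poset +
  fixes k :: nat
  assumes two_le_k: "2 \<le> k" and kk_free: "\<not> contains_k_plus_k k X lt"
begin

definition down :: "'a \<Rightarrow> 'a set" where
  "down u = {z\<in>X. lt z u}"

definition long_down :: "'a \<Rightarrow> 'a set" where
  "long_down u = {z. \<exists>S\<subseteq>X. k \<le> card S \<and> is_chain lt S \<and> z \<in> S \<and> u \<in> S \<and> (\<forall>s\<in>S. le z s \<and> le s u)}"

lemma long_down_subset: "long_down u \<subseteq> X"
  unfolding long_down_def by blast

lemma long_down_le: "z \<in> long_down u \<Longrightarrow> le z u"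
  unfolding long_down_def by blast

lemma long_down_mono:
  assumes "u \<in> X" "v \<in> X" "lt u v"
  shows "long_down u \<subseteq> long_down v"
proof
  fix z assume "z \<in> long_down u"
  then obtain S where S: "S \<subseteq> X" "k \<le> card S" "is_chain lt S" "z \<in> S" "u \<in> S"
      "\<forall>s\<in>S. le z s \<and> le s u"
    unfolding long_down_def by blast
  have below_v: "\<forall>s\<in>S. lt s v" using S(1,6) assms lt_trans by blast
  have "k \<le> card (insert v S)"
    using S(2) card_insert_le[of S v] by linarith
  moreover have "is_chain lt (insert v S)"
    using S(3) below_v unfolding is_chain_def comparable_def by blast
  ultimately show "z \<in> long_down v"
    unfolding long_down_def using S below_v assms by (intro CollectI exI[of _ "insert v S"]) auto
qed

lemma long_down_subset_down:
  assumes B: "B \<subseteq> X" "is_chain lt B" "card B = k" and b: "b \<in> B" "\<forall>c\<in>B. le c b"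
    and incomparable: "\<forall>c\<in>B. \<not> comparable lt x c"
  shows "long_down x \<subseteq> down b"
proof
  fix z assume "z \<in> long_down x"
  then obtain S where S: "S \<subseteq> X" "k \<le> card S" "is_chain lt S" "z \<in> S" "x \<in> S"
      "\<forall>s\<in>S. le z s \<and> le s x"
    unfolding long_down_def by blast
  show "z \<in> down b"
  proof (rule ccontr)
    assume z_not_below: "z \<notin> down b"
    have separated: "\<not> comparable lt s c" if "s \<in> S" "c \<in> B" for s c
    proof
      assume "comparable lt s c"
      then consider "s = c" | "lt s c" | "lt c s" unfolding comparable_def by blast
      moreover have X_mem: "s \<in> X" "c \<in> X" "b \<in> X" "x \<in> X" "z \<in> X" using that S B b by auto
      moreover have "le z s" "le s x" "le c b" using S(6) b(2) that by auto
      moreover have "\<not> lt x c" "\<not> lt c x" "x \<noteq> c" "\<not> lt z b"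
        using incomparable z_not_below that X_mem unfolding comparable_def down_def by auto
      ultimately show False using lt_trans by metis
    qed
    obtain S' where S': "S' \<subseteq> S" "card S' = k"
      using obtain_subset_with_card_n[OF S(2)] by metis
    have "contains_k_plus_k k X lt"
      unfolding contains_k_plus_k_def
    proof (intro exI conjI)
      show "S' \<inter> B = {}" using separated S'(1) unfolding comparable_def by blast
      show "is_chain lt S'" using S(3) S'(1) by (rule is_chain_subset)
      show "\<forall>a\<in>S'. \<forall>c\<in>B. \<not> comparable lt a c" using separated S'(1) by blast
    qed (use S S' B in auto)
    with kk_free show False ..
  qed
qed

lemma down_subset_long_down:
  assumes U: "U \<subseteq> X" "is_chain lt U" "k \<le> card U + 1"
    and "b \<in> X" "t \<in> X" "le b t" and between: "\<forall>u\<in>U. le b u \<and> le u t"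
  shows "down b \<subseteq> long_down t"
proof
  fix z assume "z \<in> down b"
  then have z: "z \<in> X" "lt z b" unfolding down_def by auto
  let ?S = "insert z (insert t U)"
  have above_z: "\<forall>s\<in>insert t U. lt z s"
    using z between U(1) \<open>b \<in> X\<close> \<open>t \<in> X\<close> \<open>le b t\<close> lt_trans by blast
  then have "z \<notin> insert t U" using z(1) lt_irrefl by blast
  then have "card ?S = Suc (card (insert t U))"
    using finite_subset_X[OF U(1)] by simp
  then have "k \<le> card ?S" using U(3) card_insert_le[of U t] by linarith
  moreover have "is_chain lt ?S"
    using U(2) above_z between unfolding is_chain_def comparable_def by blast
  ultimately show "z \<in> long_down t"
    unfolding long_down_def using U(1) z(1) \<open>t \<in> X\<close> above_z between
    by (intro CollectI exI[of _ ?S]) auto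
qed

lemma card_long_down_less:
  assumes C: "C \<subseteq> X" "is_chain lt C" "2 * k - 2 \<le> card C"
    and t: "t \<in> X" "\<forall>c\<in>C. le c t" and incomparable: "\<forall>c\<in>C. \<not> comparable lt x c"
  shows "card (long_down x) < card (long_down t)"
proof -
  obtain f where f: "bij_betw f {..<card C} C" "\<And>i j. i < j \<Longrightarrow> j < card C \<Longrightarrow> lt (f i) (f j)"
    using chain_enumeration[OF C(1,2)] by blast
  have f_in: "f i \<in> C" if "i < card C" for i
    using f(1) that bij_betwE by blast
  have f_le: "le (f i) (f j)" if "i \<le> j" "j < card C" for i j
    using f(2) that by (cases "i = j") auto
  define b where "b = f (k - 1)" \<comment> \<open>c_k of the sketch: f enumerates C increasingly\<close>
  have lower: "f ` {..<k} \<subseteq> C" and upper: "f ` {k - 1..<2 * k - 2} \<subseteq> C"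
    using f_in C(3) two_le_k by auto
  have inj: "inj_on f {..<card C}" using f(1) bij_betw_def by blast
  have card_lower: "card (f ` {..<k}) = k"
    using inj_on_subset[OF inj, of "{..<k}"] C(3) two_le_k by (subst card_image) auto
  have card_upper: "card (f ` {k - 1..<2 * k - 2}) = k - 1"
  proof -
    have "{k - 1..<2 * k - 2} \<subseteq> {..<card C}" using C(3) by auto
    then show ?thesis using inj_on_subset[OF inj] two_le_k by (subst card_image) auto
  qed
  have "long_down x \<subseteq> down b"
  proof (rule long_down_subset_down)
    show "\<forall>c\<in>f ` {..<k}. le c b"
      unfolding b_def using f_le C(3) two_le_k by auto
  qed (use lower card_lower C incomparable two_le_k is_chain_subset in \<open>auto simp: b_def\<close>)
  moreover have "down b \<subseteq> long_down t"
  proof (rule down_subset_long_down)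
    show "\<forall>u\<in>f ` {k - 1..<2 * k - 2}. le b u \<and> le u t"
      unfolding b_def using f_le f_in C(3) t(2) by auto
  qed (use upper card_upper C t f_in two_le_k is_chain_subset in \<open>auto simp: b_def\<close>)
  moreover have "f 0 \<in> down b"
    unfolding b_def down_def using f(2) f_in C two_le_k by auto
  moreover have "f 0 \<notin> long_down x"
    using long_down_le incomparable f_in C(3) two_le_k unfolding comparable_def by fastforce
  ultimately have "long_down x \<subset> long_down t" by blast
  then show ?thesis using finite_subset_X[OF long_down_subset] by (rule psubset_card_mono[rotated])
qed

text \<open>Since card (down u) \<le> card X, the level compares (card (long_down u), card (down u))
  lexicographically.\<close>

definition level :: "'a \<Rightarrow> real" where
  "level u = real ((card X + 1) * card (long_down u) + card (down u))"

lemma level_strict_mono: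
  assumes "u \<in> X" "v \<in> X" "lt u v"
  shows "level u < level v"
proof -
  have "card (long_down u) \<le> card (long_down v)"
    using long_down_mono[OF assms] finite_subset_X[OF long_down_subset] by (rule card_mono[rotated])
  moreover have "card (down u) < card (down v)"
  proof (rule psubset_card_mono)
    show "finite (down v)" unfolding down_def using finite_X by simp
    show "down u \<subset> down v" unfolding down_def using assms lt_trans lt_irrefl by blast
  qed
  ultimately have "(card X + 1) * card (long_down u) + card (down u)
      < (card X + 1) * card (long_down v) + card (down v)"
    by (intro add_le_less_mono mult_le_mono2)
  then show ?thesis unfolding level_def by (simp only: of_nat_less_iff)
qed

lemma card_long_down_le_of_level_le:
  assumes "level t \<le> level x"
  shows "card (long_down t) \<le> card (long_down x)"
proof (rule ccontr)
  assume "\<not> ?thesis"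
  then have "(card X + 1) * (card (long_down x) + 1) \<le> (card X + 1) * card (long_down t)"
    by (intro mult_le_mono2) simp
  moreover have "card (down x) \<le> card X"
    unfolding down_def using finite_X by (intro card_mono) auto
  ultimately have "(card X + 1) * card (long_down x) + card (down x)
      < (card X + 1) * card (long_down t) + card (down t)"
    by simp
  then have "level x < level t" unfolding level_def by (simp only: of_nat_less_iff)
  with assms show False by simp
qed

lemma chain_in_antichain_card_le:
  assumes A: "A \<subseteq> X" "is_antichain (level_interval_order X lt level) A"
    and C: "C \<subseteq> A" "is_chain lt C"
  shows "card C \<le> 2 * k - 3"
proof (rule ccontr)
  assume "\<not> ?thesis"
  then have long: "2 * k - 2 \<le> card C" by simp
  then have "2 \<le> card C" using two_le_k by linarith
  have C_X: "C \<subseteq> X" using A C by blast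
  obtain bot top where bot_top: "bot \<in> C" "top \<in> C" "lt bot top"
    and between: "\<forall>c\<in>C. le bot c \<and> le c top"
    by (rule chain_bottom_top[OF C_X C(2) \<open>2 \<le> card C\<close>])
  have X_mem: "bot \<in> X" "top \<in> X" using bot_top C_X by auto
  have "bot \<noteq> top" using bot_top(3) lt_irrefl X_mem by blast
  then have "\<not> comparable (level_interval_order X lt level) bot top"
    using A(2) C(1) bot_top unfolding is_antichain_def by blast
  then have "\<not> level_interval_order X lt level bot top" unfolding comparable_def by blast
  then obtain x where x: "x \<in> X" "\<not> lt bot x" "level top \<le> level x"
    using not_level_interval_order_witness X_mem(1) by blast
  have level_top: "level c \<le> level top" if "c \<in> C" for c
    using between that level_strict_mono[of c top] C_X X_mem by fastforce
  have "\<forall>c\<in>C. \<not> comparable lt x c"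
  proof (intro ballI notI)
    fix c assume c: "c \<in> C" and "comparable lt x c"
    then consider "lt c x" | "x = c" | "lt x c" unfolding comparable_def by blast
    then show False
    proof cases
      case 1
      then have "lt bot x" using between c lt_trans[of bot c x] C_X X_mem x(1) by auto
      with x(2) show False ..
    next
      case 2
      then have "x = bot" using between c x(2) by blast
      then show False using level_strict_mono[OF X_mem bot_top(3)] x(3) by simp
    next
      case 3
      have "level x < level c" using level_strict_mono[OF x(1) _ 3] c C_X by blast
      also have "\<dots> \<le> level top" using level_top c .
      finally show False using x(3) by simp
    qed
  qed
  then have "card (long_down x) < card (long_down top)"
    using card_long_down_less[OF C_X C(2) long X_mem(2)] between by blast
  with card_long_down_le_of_level_le[OF x(3)] show False by simp
qed

end

theorem theorem1:
  fixes X :: "'a set" and ltP :: "'a \<Rightarrow> 'a \<Rightarrow> bool" and k :: nat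
  assumes "k \<ge> 2"
    and "finite X"
    and "strict_poset X ltP"
    and "\<not> contains_k_plus_k k X ltP"
  shows "\<exists>ltQ. interval_order X ltQ \<and> extends X ltP ltQ \<and>
           width X ltQ \<le> (2 * k - 3) * width X ltP"
proof -
  interpret kk_free_poset X ltP k using assms by unfold_locales auto
  let ?Q = "level_interval_order X ltP level"
  obtain A where A: "A \<subseteq> X" "is_antichain ?Q A" "card A = width X ?Q"
    by (rule width_attained)
  have "width X ?Q \<le> (2 * k - 3) * width X ltP"
    using card_le_chain_bound_mult_width[OF A(1) chain_in_antichain_card_le[OF A(1,2)]] A(3) by simp
  then show ?thesis
    using interval_order_level_interval_order extends_level_interval_order by blast
qed

end
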